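(* Let $q$ be a positive integer, $k\ge1$, $p_1,\dots,p_k\ge1$ integers and $s_i,a_{ij},\nu$ integers. Suppose $B(n)=\lceil n/q\rceil$ formally satisfies the recursion $R(n)=\sum_{i=1}^k R\big(n-s_i-\sum_{j=1}^{p_i}R(n-a_{ij})\big)+\nu$, i.e. $B(n)=\sum_{i=1}^k B\big(n-s_i-\sum_{j=1}^{p_i}B(n-a_{ij})\big)+\nu$ for all integers $n$. Then $B$ also formally satisfies the recursion $$R'(n)=\sum_{i=1}^k R'\Big(n-s_i-\sum_{j=1}^{p_i}R'(n-a_{ij})\Big)+R'\big(n-1-R'(n-1)-R'(n-2)-\cdots-R'(n-q)\big)+\nu,$$ i.e. $B(n)=\sum_{i=1}^k B\big(n-s_i-\sum_{j}B(n-a_{ij})\big)+B\big(n-1-\sum_{t=1}^q B(n-t)\big)+\nu$ for all integers $n$. *)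

theory Defs
  imports Complex_Main
begin

definition ceilq :: "int \<Rightarrow> int \<Rightarrow> int" where
  "ceilq q n = \<lceil>real_of_int n / real_of_int q\<rceil>"

end

theory Submission
  imports Defs
begin

text \<open>By Hermite's identity the q values \<open>B(n-1), ..., B(n-q)\<close> of \<open>B(n) = \<lceil>n/q\<rceil>\<close> add up
  to exactly \<open>n - 1\<close>. Hence the extra term of the new recursion is \<open>B(0) = 0\<close>, and the new
  recursion reduces to the old one.\<close>

lemma ceilq_eq_minus_div: "ceilq q n = - ((- n) div q)"
  unfolding ceilq_def ceiling_def
  by (metis floor_divide_of_int_eq minus_divide_left of_int_minus)

lemma ceilq_0: "ceilq q 0 = 0"
  by (simp add: ceilq_def)

lemma sum_lessThan_add_div_eq:
  fixes Q :: nat and m :: int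
  assumes "Q > 0"
  shows "(\<Sum>u<Q. (m + int u) div int Q) = m"
proof -
  define S where "S m = (\<Sum>u<Q. (m + int u) div int Q)" for m
  obtain Q' where Q: "Q = Suc Q'"
    using assms by (cases Q) auto
  have S_0: "S 0 = 0"
    unfolding S_def by (rule sum.neutral) simp
  have S_succ: "S (m + 1) = S m + 1" for m
  proof -
    \<comment> \<open>Shifting m by one replaces the summand for \<open>u = 0\<close> by the one for \<open>u = Q\<close>.\<close>
    have "S m = m div int Q + (\<Sum>u<Q'. (m + 1 + int u) div int Q)"
      unfolding S_def Q sum.lessThan_Suc_shift by (simp add: ac_simps)
    moreover have "S (m + 1) = (\<Sum>u<Q'. (m + 1 + int u) div int Q) + (m + int Q) div int Q"
      unfolding S_def by (simp add: Q ac_simps)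
    moreover have "(m + int Q) div int Q = m div int Q + 1"
      using assms by simp
    ultimately show ?thesis
      by linarith
  qed
  have "S m = m" for m
  proof (induction m rule: int_induct[where k = 0])
    case base
    show ?case by (rule S_0)
  next
    case (step1 i)
    then show ?case using S_succ[of i] by simp
  next
    case (step2 i)
    then show ?case using S_succ[of "i - 1"] by simp
  qed
  then show ?thesis
    unfolding S_def .
qed

lemma sum_ceilq_predecessors:
  assumes "q \<ge> 1"
  shows "(\<Sum>t=1..nat q. ceilq q (n - int t)) = n - 1"
proof -
  have "(\<Sum>t=1..nat q. ceilq q (n - int t)) = - (\<Sum>u<nat q. (1 - n + int u) div int (nat q))"
    using assms
    by (simp add: ceilq_eq_minus_div sum.atLeast1_atMost_eq sum_negf algebra_simps)
  also have "\<dots> = n - 1"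
    using assms by (subst sum_lessThan_add_div_eq) simp_all
  finally show ?thesis .
qed

theorem theorem5:
  fixes q :: int and k :: nat and p :: "nat \<Rightarrow> nat"
    and s :: "nat \<Rightarrow> int" and a :: "nat \<Rightarrow> nat \<Rightarrow> int" and \<nu> :: int
  assumes "q \<ge> 1" and "k \<ge> 1" and "\<forall>i\<in>{1..k}. p i \<ge> 1"
    and "\<forall>n::int. ceilq q n =
           (\<Sum>i=1..k. ceilq q (n - s i - (\<Sum>j=1..p i. ceilq q (n - a i j)))) + \<nu>"
  shows "\<forall>n::int. ceilq q n =
           (\<Sum>i=1..k. ceilq q (n - s i - (\<Sum>j=1..p i. ceilq q (n - a i j))))
           + ceilq q (n - 1 - (\<Sum>t=1..nat q. ceilq q (n - int t))) + \<nu>"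
  unfolding sum_ceilq_predecessors[OF assms(1)] diff_self ceilq_0 add_0_right
  by (rule assms(4))

end
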